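(* Let $(\Omega,d)$ be a compact Hadamard space, let $n\ge1$, and fix $Y_1,\dots,Y_n\in\Omega$. Let $\Delta^{n-1}=\{w\in\mathbb{R}^n: w_i\ge0,\ \sum_i w_i=1\}$ and, for $w\in\Delta^{n-1}$, let $\mu(w)=\operatorname{argmin}_{y\in\Omega}\sum_{i=1}^n w_i d^2(y,Y_i)$ be the weighted Fréchet mean (which exists and is unique in a Hadamard space). Let $D=\sup_{u,v\in\Omega}d(u,v)$. Then for all $w_1,w_2\in\Delta^{n-1}$, \[d(\mu(w_1),\mu(w_2))\le D\sqrt{n}\,\|w_1-w_2\|_2.\]
   Context: A metric space $(\Omega,d)$ is a Hadamard space if it is complete and for every $\omega_1,\omega_2\in\Omega$ there exists $\alpha\in\Omega$ such that $d^2(\beta,\alpha)\le \tfrac12 d^2(\beta,\omega_1)+\tfrac12 d^2(\beta,\omega_2)-\tfrac14 d^2(\omega_1,\omega_2)$ for all $\beta\in\Omega$. $\|\cdot\|_2$ is the Euclidean norm on $\mathbb{R}^n$. *)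

theory Defs
  imports "HOL-Analysis.Analysis"
begin

text \<open>Hadamard space: complete metric space with the midpoint (CAT(0)) inequality,
  as in the paper. The whole type plays the role of \<Omega>.\<close>
definition hadamard_space :: "'a::metric_space itself \<Rightarrow> bool" where
  "hadamard_space _ \<longleftrightarrow> complete (UNIV :: 'a set) \<and>
     (\<forall>\<omega>1 \<omega>2 :: 'a. \<exists>\<alpha>. \<forall>\<beta>.
        (dist \<beta> \<alpha>)\<^sup>2 \<le> (1/2) * (dist \<beta> \<omega>1)\<^sup>2 + (1/2) * (dist \<beta> \<omega>2)\<^sup>2
                          - (1/4) * (dist \<omega>1 \<omega>2)\<^sup>2)"

definition prob_simplex :: "(real ^ 'n) set" where
  "prob_simplex = {w. (\<forall>i. 0 \<le> w $ i) \<and> (\<Sum>i\<in>UNIV. w $ i) = 1}"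

definition frechet_mean :: "real ^ 'n \<Rightarrow> ('n \<Rightarrow> 'a::metric_space) \<Rightarrow> 'a" where
  "frechet_mean w Y = (THE y. \<forall>z. (\<Sum>i\<in>UNIV. w $ i * (dist y (Y i))\<^sup>2)
                                 \<le> (\<Sum>i\<in>UNIV. w $ i * (dist z (Y i))\<^sup>2))"

end

theory Submission
  imports Defs
begin

text \<open>Write \<open>F\<^sub>w(y) = \<Sum>\<^sub>i w\<^sub>i d(y,Y\<^sub>i)\<^sup>2\<close>. Applying the midpoint inequality termwise and bisecting
  repeatedly towards a minimiser \<open>m\<close> gives the variance inequality
  \<open>F\<^sub>w(m) + d(m,z)\<^sup>2 \<le> F\<^sub>w(z)\<close>; in particular the minimiser is unique, so it is the Frechet mean.
  Adding the variance inequalities for \<open>(w\<^sub>1, \<mu>(w\<^sub>2))\<close> and \<open>(w\<^sub>2, \<mu>(w\<^sub>1))\<close> yields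
  \<open>2 d\<^sup>2 \<le> \<Sum>\<^sub>i (w\<^sub>1 - w\<^sub>2)\<^sub>i (d(\<mu>(w\<^sub>2),Y\<^sub>i)\<^sup>2 - d(\<mu>(w\<^sub>1),Y\<^sub>i)\<^sup>2) \<le> 2 D d \<parallel>w\<^sub>1 - w\<^sub>2\<parallel>\<^sub>1\<close> with
  \<open>d = d(\<mu>(w\<^sub>1),\<mu>(w\<^sub>2))\<close>, and \<open>\<parallel>v\<parallel>\<^sub>1 \<le> \<surd>n \<parallel>v\<parallel>\<^sub>2\<close> by Cauchy-Schwarz.\<close>

definition frechet_functional :: "real ^ 'n \<Rightarrow> ('n::finite \<Rightarrow> 'a::metric_space) \<Rightarrow> 'a \<Rightarrow> real" where
  "frechet_functional w Y y = (\<Sum>i\<in>UNIV. w $ i * (dist y (Y i))\<^sup>2)"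

lemma hadamard_midpoint:
  fixes a b :: "'a::metric_space"
  assumes "hadamard_space TYPE('a)"
  obtains c where "\<And>\<beta>. (dist \<beta> c)\<^sup>2 \<le> (1/2) * (dist \<beta> a)\<^sup>2 + (1/2) * (dist \<beta> b)\<^sup>2
                                 - (1/4) * (dist a b)\<^sup>2"
    and "dist a c = dist a b / 2"
proof -
  obtain c where c: "\<And>\<beta>. (dist \<beta> c)\<^sup>2 \<le> (1/2) * (dist \<beta> a)\<^sup>2 + (1/2) * (dist \<beta> b)\<^sup>2
                                 - (1/4) * (dist a b)\<^sup>2"
    using assms unfolding hadamard_space_def by blast
  have "(dist a c)\<^sup>2 \<le> (dist a b / 2)\<^sup>2" "(dist b c)\<^sup>2 \<le> (dist a b / 2)\<^sup>2"
    using c[of a] c[of b] by (simp_all add: power_divide dist_commute)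
  then have "dist a c \<le> dist a b / 2" "dist b c \<le> dist a b / 2"
    by (simp_all add: power2_le_iff_abs_le)
  moreover have "dist a b \<le> dist a c + dist b c"
    by (rule dist_triangle2)
  ultimately have "dist a c = dist a b / 2"
    by linarith
  with c show thesis
    by (rule that)
qed

lemma frechet_functional_midpoint:
  assumes w: "w \<in> prob_simplex"
    and c: "\<And>\<beta>. (dist \<beta> c)\<^sup>2 \<le> (1/2) * (dist \<beta> a)\<^sup>2 + (1/2) * (dist \<beta> b)\<^sup>2
                                 - (1/4) * (dist a b)\<^sup>2"
  shows "frechet_functional w Y c
           \<le> frechet_functional w Y a / 2 + frechet_functional w Y b / 2 - (dist a b)\<^sup>2 / 4"
proof -
  have w_nonneg: "\<And>i. 0 \<le> w $ i" and w_sum: "(\<Sum>i\<in>UNIV. w $ i) = 1"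
    using w unfolding prob_simplex_def by auto
  have "frechet_functional w Y c
      \<le> (\<Sum>i\<in>UNIV. w $ i * ((1/2) * (dist (Y i) a)\<^sup>2 + (1/2) * (dist (Y i) b)\<^sup>2
                              - (1/4) * (dist a b)\<^sup>2))"
    unfolding frechet_functional_def
    by (intro sum_mono mult_left_mono) (use c w_nonneg in \<open>auto simp: dist_commute[of _ "Y _"]\<close>)
  also have "\<dots> = frechet_functional w Y a / 2 + frechet_functional w Y b / 2
                  - (dist a b)\<^sup>2 / 4 * (\<Sum>i\<in>UNIV. w $ i)"
    unfolding frechet_functional_def
    by (simp add: algebra_simps sum.distrib sum_subtractf sum_distrib_left sum_divide_distrib
        sum_distrib_right dist_commute)
  finally show ?thesis
    using w_sum by simp
qed

lemma le_of_one_minus_half_power_le: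
  fixes x y :: real
  assumes "\<And>k. (1 - (1/2)^k) * x \<le> y"
  shows "x \<le> y"
proof -
  have "(\<lambda>k. (1 - (1/2::real)^k) * x) \<longlonglongrightarrow> (1 - 0) * x"
    by (intro tendsto_intros LIMSEQ_power_zero) simp
  then show ?thesis
    using assms by (intro LIMSEQ_le_const2) auto
qed

lemma frechet_functional_variance_inequality:
  fixes Y :: "'n::finite \<Rightarrow> 'a::metric_space"
  assumes H: "hadamard_space TYPE('a)" and w: "w \<in> prob_simplex"
    and m: "\<And>z. frechet_functional w Y m \<le> frechet_functional w Y z"
  shows "frechet_functional w Y m + (dist m z)\<^sup>2 \<le> frechet_functional w Y z"
proof -
  let ?F = "frechet_functional w Y"
  have "(1 - (1/2)^k) * (dist m z)\<^sup>2 \<le> ?F z - ?F m" for k z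
  proof (induction k arbitrary: z)
    case 0
    show ?case
      using m by simp
  next
    case (Suc k)
    obtain c where mid: "\<And>\<beta>. (dist \<beta> c)\<^sup>2 \<le> (1/2) * (dist \<beta> m)\<^sup>2 + (1/2) * (dist \<beta> z)\<^sup>2
                                 - (1/4) * (dist m z)\<^sup>2"
      and half: "dist m c = dist m z / 2"
      using hadamard_midpoint[OF H, where a = m and b = z] by blast
    define t :: real where "t = (1/2)^k"
    have "?F c \<le> ?F m / 2 + ?F z / 2 - (dist m z)\<^sup>2 / 4"
      by (rule frechet_functional_midpoint[OF w mid])
    moreover have "(1 - t) * (dist m z)\<^sup>2 / 4 \<le> ?F c - ?F m"
      using Suc.IH[of c] half by (simp add: t_def power_divide)
    ultimately have "(1 - t / 2) * (dist m z)\<^sup>2 \<le> ?F z - ?F m"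
      by (simp add: field_simps)
    then show ?case
      by (simp add: t_def)
  qed
  then have "(dist m z)\<^sup>2 \<le> ?F z - ?F m"
    by (rule le_of_one_minus_half_power_le)
  then show ?thesis
    by simp
qed

lemma frechet_mean_minimises:
  fixes Y :: "'n::finite \<Rightarrow> 'a::metric_space"
  assumes H: "hadamard_space TYPE('a)" and "compact (UNIV :: 'a set)"
    and w: "w \<in> prob_simplex"
  shows "frechet_functional w Y (frechet_mean w Y) \<le> frechet_functional w Y z"
proof -
  let ?F = "frechet_functional w Y"
  have "continuous_on UNIV ?F"
    unfolding frechet_functional_def by (intro continuous_intros)
  then obtain m where m: "\<And>z. ?F m \<le> ?F z"
    using continuous_attains_inf[OF \<open>compact UNIV\<close>] by blast
  have "frechet_mean w Y = m"
    unfolding frechet_mean_def frechet_functional_def[symmetric]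
  proof (rule the_equality)
    show "\<forall>z. ?F m \<le> ?F z"
      using m by blast
  next
    fix y
    assume "\<forall>z. ?F y \<le> ?F z"
    then have "?F y + (dist y m)\<^sup>2 \<le> ?F m"
      by (intro frechet_functional_variance_inequality[OF H w]) blast
    with m[of y] have "(dist y m)\<^sup>2 \<le> 0"
      by linarith
    then show "y = m"
      by simp
  qed
  with m show ?thesis
    by simp
qed

lemma abs_power2_dist_diff_le:
  fixes x x' y :: "'a::metric_space"
  shows "\<bar>(dist x y)\<^sup>2 - (dist x' y)\<^sup>2\<bar> \<le> dist x x' * (dist x y + dist x' y)"
proof -
  have "(dist x y)\<^sup>2 - (dist x' y)\<^sup>2 = (dist x y - dist x' y) * (dist x y + dist x' y)"
    by (simp add: power2_eq_square algebra_simps)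
  then have "\<bar>(dist x y)\<^sup>2 - (dist x' y)\<^sup>2\<bar> = \<bar>dist x y - dist x' y\<bar> * (dist x y + dist x' y)"
    by (simp add: abs_mult)
  also have "\<dots> \<le> dist x x' * (dist x y + dist x' y)"
    using abs_dist_diff_le[of x y x'] by (intro mult_right_mono) (simp_all add: dist_commute)
  finally show ?thesis .
qed

lemma frechet_functional_weight_change:
  fixes Y :: "'n::finite \<Rightarrow> 'a::metric_space"
  assumes D: "\<And>u v :: 'a. dist u v \<le> D"
  shows "(frechet_functional w Y x - frechet_functional w Y x')
           - (frechet_functional v Y x - frechet_functional v Y x')
         \<le> 2 * D * dist x x' * (\<Sum>i\<in>UNIV. \<bar>(w - v) $ i\<bar>)"
proof -
  have "(w $ i - v $ i) * ((dist x (Y i))\<^sup>2 - (dist x' (Y i))\<^sup>2)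
          \<le> \<bar>(w - v) $ i\<bar> * (2 * D * dist x x')" for i
  proof -
    have "\<bar>(dist x (Y i))\<^sup>2 - (dist x' (Y i))\<^sup>2\<bar> \<le> dist x x' * (D + D)"
      using abs_power2_dist_diff_le[of x "Y i" x'] D[of x "Y i"] D[of x' "Y i"]
      by (meson add_mono order_trans mult_left_mono zero_le_dist)
    also have "\<dots> = 2 * D * dist x x'"
      by simp
    finally have "\<bar>(w $ i - v $ i) * ((dist x (Y i))\<^sup>2 - (dist x' (Y i))\<^sup>2)\<bar>
                 \<le> \<bar>(w - v) $ i\<bar> * (2 * D * dist x x')"
      unfolding abs_mult vector_minus_component by (intro mult_left_mono) simp_all
    then show ?thesis
      by linarith
  qed
  then have "(\<Sum>i\<in>UNIV. (w $ i - v $ i) * ((dist x (Y i))\<^sup>2 - (dist x' (Y i))\<^sup>2))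
               \<le> (\<Sum>i\<in>UNIV. \<bar>(w - v) $ i\<bar> * (2 * D * dist x x'))"
    by (rule sum_mono)
  then show ?thesis
    unfolding frechet_functional_def
    by (simp add: algebra_simps sum_subtractf sum.distrib sum_distrib_left)
qed

lemma sum_abs_le_sqrt_card_mult_norm:
  fixes v :: "real ^ 'n::finite"
  shows "(\<Sum>i\<in>UNIV. \<bar>v $ i\<bar>) \<le> sqrt (real CARD('n)) * norm v"
proof -
  have "(\<Sum>i\<in>UNIV. \<bar>v $ i\<bar>) = (\<Sum>i\<in>UNIV. \<bar>(\<lambda>_. 1::real) i\<bar> * \<bar>(\<lambda>i. norm (v $ i)) i\<bar>)"
    by simp
  also have "\<dots> \<le> L2_set (\<lambda>_::'n. 1::real) UNIV * L2_set (\<lambda>i. norm (v $ i)) UNIV"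
    by (rule L2_set_mult_ineq)
  also have "\<dots> = sqrt (real CARD('n)) * norm v"
    by (simp add: L2_set_constant norm_vec_def)
  finally show ?thesis .
qed

theorem lemma4p3:
  fixes Y :: "'n::finite \<Rightarrow> 'a::metric_space"
    and w1 w2 :: "real ^ 'n"
  assumes "hadamard_space TYPE('a)"
    and "compact (UNIV :: 'a set)"
    and "w1 \<in> prob_simplex" and "w2 \<in> prob_simplex"
  shows "dist (frechet_mean w1 Y) (frechet_mean w2 Y)
           \<le> (SUP p\<in>(UNIV :: ('a \<times> 'a) set). dist (fst p) (snd p))
              * sqrt (real CARD('n)) * norm (w1 - w2)"
proof -
  let ?F = frechet_functional and ?m1 = "frechet_mean w1 Y" and ?m2 = "frechet_mean w2 Y"
  define D where "D = diameter (UNIV :: 'a set)"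
  define d where "d = dist ?m1 ?m2"
  define K where "K = D * sqrt (real CARD('n)) * norm (w1 - w2)"
  have D: "dist u v \<le> D" for u v :: 'a
    unfolding D_def using compact_imp_bounded[OF assms(2)] by (simp add: diameter_bounded_bound)
  have "0 \<le> D" and "0 \<le> d"
    using D[of ?m1 ?m1] by (simp_all add: d_def)
  have "?F w1 Y ?m1 + d\<^sup>2 \<le> ?F w1 Y ?m2" "?F w2 Y ?m2 + d\<^sup>2 \<le> ?F w2 Y ?m1"
    unfolding d_def using frechet_functional_variance_inequality frechet_mean_minimises assms
    by (metis dist_commute)+
  then have "2 * d\<^sup>2 \<le> (?F w1 Y ?m2 - ?F w1 Y ?m1) - (?F w2 Y ?m2 - ?F w2 Y ?m1)"
    by simp
  also have "\<dots> \<le> 2 * D * d * (\<Sum>i\<in>UNIV. \<bar>(w1 - w2) $ i\<bar>)"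
    unfolding d_def using frechet_functional_weight_change[OF D] by (metis dist_commute)
  also have "\<dots> \<le> 2 * D * d * (sqrt (real CARD('n)) * norm (w1 - w2))"
    using \<open>0 \<le> D\<close> \<open>0 \<le> d\<close> by (intro mult_left_mono sum_abs_le_sqrt_card_mult_norm) simp
  finally have "d * d \<le> d * K"
    by (simp add: K_def power2_eq_square algebra_simps)
  moreover have "0 \<le> K"
    using \<open>0 \<le> D\<close> by (simp add: K_def)
  ultimately have "d \<le> K"
    using \<open>0 \<le> d\<close> by (cases "d = 0") (simp_all add: mult_le_cancel_left)
  moreover have "D = (SUP p\<in>(UNIV :: ('a \<times> 'a) set). dist (fst p) (snd p))"
    by (simp add: D_def diameter_def split_def)
  ultimately show ?thesis
    by (simp add: d_def K_def)
qed

end
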